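(* Let $a>0$. Then $$\int_0^1 f_a(x)\,dx=\frac{1}{1+a}\Bigl[1-\frac{a\pi}{a+1}\cot\frac{a\pi}{a+1}\Bigr]$$ and $$\int_0^{a/(a+1)} f_a(x)\,dx=\frac{1}{2(1+a)^2}\Bigl[1+a+a^2-a\pi\cot\frac{a\pi}{a+1}\Bigr].$$
   Context: For $a>0$ let $\phi_a(x)=x^a-x^{a+1}$ on $[0,1]$, strictly increasing on $[0,x_0]$ and strictly decreasing on $[x_0,1]$ with $x_0=a/(a+1)$. Let $l_a,r_a$ be the restrictions of $\phi_a$ to $[0,x_0]$ and $[x_0,1]$. Define $f_a(x)=r_a^{-1}(\phi_a(x))$ for $0\le x\le x_0$ and $f_a(x)=l_a^{-1}(\phi_a(x))$ for $x_0\le x\le1$. *)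

theory Defs
  imports "HOL-Analysis.Analysis"
begin

definition phi :: "real \<Rightarrow> real \<Rightarrow> real" where
  "phi a x = x powr a - x powr (a + 1)"

definition xzero :: "real \<Rightarrow> real" where
  "xzero a = a / (a + 1)"

definition f :: "real \<Rightarrow> real \<Rightarrow> real" where
  "f a x = (if x \<le> xzero a
            then the_inv_into {xzero a..1} (phi a) (phi a x)
            else the_inv_into {0..xzero a} (phi a) (phi a x))"

end

theory Submission
  imports Defs
begin

text \<open>For \<open>0 \<le> w \<le> 1\<close> the two points \<open>x \<le> xzero a \<le> y\<close> with \<open>phi a x = phi a y\<close> and ratio
  \<open>x / y = w\<close> are \<open>y = Y(w) = (1 - w\<^sup>a) / (1 - w\<^sup>a\<^sup>+\<^sup>1)\<close> and \<open>x = w Y(w)\<close>, and \<open>f a\<close> swaps them.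
  Substituting along this parametrisation, the integrals of \<open>f a\<close> over \<open>[0, xzero a]\<close> and
  \<open>[xzero a, 1]\<close> become \<open>\<integral> Y (w Y)'\<close> and \<open>- \<integral> w Y Y'\<close> over \<open>[0, 1]\<close>. Their difference is
  \<open>[w Y\<^sup>2]\<^sub>0\<^sup>1 = xzero a\<^sup>2\<close>. Their sum is \<open>\<integral> Y\<^sup>2\<close>, and \<open>Y\<^sup>2 - xzero a (1 + w\<^sup>a) Y\<close> has the explicit
  primitive \<open>w (1 - w\<^sup>a) Y / (a + 1)\<close> vanishing at both ends, so the sum is
  \<open>xzero a \<integral> (1 - w\<^sup>2\<^sup>a) / (1 - w\<^sup>a\<^sup>+\<^sup>1)\<close>. Expanding the denominator as a geometric series
  turns this integral into a difference of digamma values, which the reflection formula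
  \<open>\<psi>(1 - q) - \<psi>(q) = \<pi> cot (\<pi> q)\<close> evaluates.\<close>

lemma Gamma_reflection_real: "Gamma (x::real) * Gamma (1 - x) = pi / sin (pi * x)"
proof -
  have "complex_of_real (Gamma x * Gamma (1 - x))
      = Gamma (complex_of_real x) * Gamma (complex_of_real (1 - x))"
    by (simp only: Gamma_complex_of_real of_real_mult)
  also have "\<dots> = Gamma (complex_of_real x) * Gamma (1 - complex_of_real x)"
    by simp
  also have "\<dots> = complex_of_real (pi / sin (pi * x))"
    by (simp add: Gamma_reflection_complex sin_of_real flip: of_real_mult)
  finally show ?thesis
    by (simp only: of_real_eq_iff)
qed

lemma Digamma_reflection_real:
  assumes "0 < x" "x < (1::real)"
  shows "Digamma (1 - x) - Digamma x = pi * cot (pi * x)"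
proof -
  have not_nonpos_int: "x \<notin> \<int>\<^sub>\<le>\<^sub>0" "1 - x \<notin> \<int>\<^sub>\<le>\<^sub>0"
    using assms by (auto elim!: nonpos_Ints_cases)
  have sin_pos: "sin (pi * x) > 0"
    using assms by (intro sin_gt_zero) auto
  have "((\<lambda>x. Gamma x * Gamma (1 - x)) has_field_derivative
      Gamma x * Gamma (1 - x) * (Digamma x - Digamma (1 - x))) (at x)"
    using not_nonpos_int by (auto intro!: derivative_eq_intros simp: algebra_simps)
  moreover have "((\<lambda>x. pi / sin (pi * x)) has_field_derivative
      - (pi / sin (pi * x)) * (pi * cos (pi * x) / sin (pi * x))) (at x)"
    using sin_pos by (auto intro!: derivative_eq_intros simp: power2_eq_square)
  ultimately have "pi / sin (pi * x) * (Digamma x - Digamma (1 - x))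
      = pi / sin (pi * x) * - (pi * cos (pi * x) / sin (pi * x))"
    by (simp add: Gamma_reflection_real DERIV_unique)
  moreover have "pi / sin (pi * x) \<noteq> 0"
    using sin_pos by simp
  ultimately have "Digamma x - Digamma (1 - x) = - (pi * cos (pi * x) / sin (pi * x))"
    by (metis mult_left_cancel)
  then show ?thesis
    by (simp add: cot_def)
qed

lemma Digamma_two_minus_diff:
  assumes "0 < q" "q < (1::real)"
  shows "Digamma (2 - q) - Digamma q = pi * cot (pi * q) + 1 / (1 - q)"
  using Digamma_plus1 [of "1 - q"] Digamma_reflection_real [OF assms] assms
  by (simp add: algebra_simps)

lemma Digamma_diff_eq_cot:
  assumes "0 < a"
  shows "(Digamma ((2 * a + 1) / (a + 1)) - Digamma (1 / (a + 1))) / (a + 1)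
           = 1 / a - pi / (a + 1) * cot (a * pi / (a + 1))"
proof -
  define q where "q = 1 / (a + 1)"
  have q: "0 < q" "q < 1" "(2 * a + 1) / (a + 1) = 2 - q" "1 / (1 - q) = (a + 1) / a"
    using assms by (simp_all add: q_def field_simps)
  have "pi * q = pi - a * pi / (a + 1)"
    using assms by (simp add: q_def field_simps)
  then have "cot (pi * q) = - cot (a * pi / (a + 1))"
    by (simp add: cot_def sin_diff cos_diff)
  then show ?thesis
    using Digamma_two_minus_diff [OF q(1,2)] assms
    by (simp add: q(3,4) flip: q_def) (simp add: q_def divide_simps)
qed

lemma Digamma_diff_sums:
  fixes x y :: real
  assumes "x \<noteq> 0" "y \<noteq> 0"
  shows "(\<lambda>n. 1 / (real n + x) - 1 / (real n + y)) sums (Digamma y - Digamma x)"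
proof -
  have Digamma_sums: "(\<lambda>n. inverse (real (Suc n)) - inverse (z + real n))
      sums (Digamma z + euler_mascheroni)" if "z \<noteq> 0" for z :: real
    using summable_Digamma[OF that] by (simp add: Digamma_def summable_sums)
  from sums_diff[OF Digamma_sums[OF assms(2)] Digamma_sums[OF assms(1)]] show ?thesis
    by (simp add: inverse_eq_divide add.commute)
qed

lemma powr_ratio_coeffs_sums:
  fixes \<alpha> \<beta> :: real
  assumes "\<alpha> > 0" "\<beta> \<ge> 0"
  shows "(\<lambda>n. 1 / (real n * \<alpha> + 1) - 1 / (real n * \<alpha> + \<beta> + 1)) sums
           ((Digamma ((\<beta> + 1) / \<alpha>) - Digamma (1 / \<alpha>)) / \<alpha>)"
proof -
  have "(\<lambda>n. (1 / (real n + 1 / \<alpha>) - 1 / (real n + (\<beta> + 1) / \<alpha>)) / \<alpha>) sums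
          ((Digamma ((\<beta> + 1) / \<alpha>) - Digamma (1 / \<alpha>)) / \<alpha>)"
    using assms by (intro sums_divide Digamma_diff_sums) (auto simp: add_pos_nonneg)
  moreover have "1 / (real n + c / \<alpha>) / \<alpha> = 1 / (real n * \<alpha> + c)" for n c
    using assms by (simp add: distrib_right)
  then have "(1 / (real n + 1 / \<alpha>) - 1 / (real n + (\<beta> + 1) / \<alpha>)) / \<alpha>
      = 1 / (real n * \<alpha> + 1) - 1 / (real n * \<alpha> + \<beta> + 1)" for n
    using assms by (simp add: diff_divide_distrib add_ac)
  ultimately show ?thesis
    by simp
qed

lemma has_integral_sums_nonneg:
  fixes t :: "nat \<Rightarrow> 'n::euclidean_space \<Rightarrow> real"
  assumes integral: "\<And>n. (t n has_integral T n) S"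
    and nonneg: "\<And>n x. x \<in> S \<Longrightarrow> 0 \<le> t n x"
    and pointwise: "\<And>x. x \<in> S \<Longrightarrow> (\<lambda>n. t n x) sums g x"
    and T_sums: "T sums I"
  shows "(g has_integral I) S"
proof -
  have partial_sums: "((\<lambda>x. \<Sum>n<N. t n x) has_integral (\<Sum>n<N. T n)) S" for N
    by (intro has_integral_sum integral) auto
  then have partial_integrals: "integral S (\<lambda>x. \<Sum>n<N. t n x) = (\<Sum>n<N. T n)" for N
    by (rule integral_unique)
  have "g integrable_on S \<and> (\<lambda>N. integral S (\<lambda>x. \<Sum>n<N. t n x)) \<longlonglongrightarrow> integral S g"
  proof (rule monotone_convergence_increasing)
    show "(\<lambda>x. \<Sum>n<N. t n x) integrable_on S" for N
      using partial_sums by blast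
    show "(\<Sum>n<N. t n x) \<le> (\<Sum>n<Suc N. t n x)" if "x \<in> S" for N x
      using nonneg [OF that] by simp
    show "(\<lambda>N. \<Sum>n<N. t n x) \<longlonglongrightarrow> g x" if "x \<in> S" for x
      using pointwise [OF that] by (simp add: sums_def)
    show "bounded (range (\<lambda>N. integral S (\<lambda>x. \<Sum>n<N. t n x)))"
      using summable_imp_sums_bounded [OF sums_summable [OF T_sums]]
      by (simp add: partial_integrals)
  qed
  then show ?thesis
    using T_sums LIMSEQ_unique by (fastforce simp: partial_integrals sums_def)
qed

lemma has_integral_powr_ratio:
  fixes \<alpha> \<beta> :: real
  assumes "\<alpha> > 0" "\<beta> \<ge> 0"
  shows "((\<lambda>w. (1 - w powr \<beta>) / (1 - w powr \<alpha>)) has_integral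
           (Digamma ((\<beta> + 1) / \<alpha>) - Digamma (1 / \<alpha>)) / \<alpha>) {0..1}"
proof -
  define t where "t n w = w powr (real n * \<alpha>) - w powr (real n * \<alpha> + \<beta>)" for n w
  have t_geometric: "t n w = (w powr \<alpha>) ^ n * (1 - w powr \<beta>)" if "w > 0" for n w
    using that by (simp add: t_def powr_add powr_realpow algebra_simps flip: powr_powr)
  have "((\<lambda>w. (1 - w powr \<beta>) / (1 - w powr \<alpha>)) has_integral
           (Digamma ((\<beta> + 1) / \<alpha>) - Digamma (1 / \<alpha>)) / \<alpha>) {0<..<1}"
  proof (rule has_integral_sums_nonneg)
    have monomial: "((\<lambda>w. w powr e) has_integral 1 / (e + 1)) {0..1}" if "e \<ge> 0" for e :: real
      using has_integral_powr_from_0 [of e 1] that by simp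
    show "(t n has_integral 1 / (real n * \<alpha> + 1) - 1 / (real n * \<alpha> + \<beta> + 1)) {0<..<1}" for n
      unfolding t_def has_integral_Icc_iff_Ioo [symmetric] using assms
      by (intro has_integral_diff monomial) auto
    show "0 \<le> t n w" if "w \<in> {0<..<1}" for n w
      using that assms by (simp add: t_geometric powr_le1)
    show "(\<lambda>n. t n w) sums ((1 - w powr \<beta>) / (1 - w powr \<alpha>))" if "w \<in> {0<..<1}" for w
    proof -
      have "norm (w powr \<alpha>) < 1"
        using that assms by (simp add: powr01_less_one)
      from sums_mult2 [OF geometric_sums [OF this], of "1 - w powr \<beta>"] show ?thesis
        using that by (simp add: t_geometric)
    qed
  qed (use assms in \<open>rule powr_ratio_coeffs_sums\<close>)
  then show ?thesis
    by (simp add: has_integral_Icc_iff_Ioo)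
qed

lemma phi_eq_powr_mult: "0 \<le> x \<Longrightarrow> phi a x = x powr a * (1 - x)"
  by (cases "x = 0") (auto simp: phi_def powr_add algebra_simps)

lemma continuous_on_phi: "0 < a \<Longrightarrow> continuous_on {0..} (phi a)"
  unfolding phi_def
  by (intro continuous_on_diff continuous_on_powr' continuous_on_id continuous_on_const) auto

lemma phi_has_real_derivative:
  assumes "0 < t"
  shows "(phi a has_real_derivative t powr (a - 1) * (a - (a + 1) * t)) (at t)"
proof -
  have "t powr (a + 1 - 1) = t powr (a - 1) * t"
    using assms by (simp add: powr_diff)
  moreover have "(phi a has_real_derivative a * t powr (a - 1) - (a + 1) * t powr (a + 1 - 1)) (at t)"
    unfolding phi_def [abs_def] using assms by (intro derivative_intros has_real_derivative_powr)
  ultimately show ?thesis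
    by (simp add: algebra_simps)
qed

lemma xzero_bounds: "0 < a \<Longrightarrow> 0 < xzero a \<and> xzero a < 1"
  by (simp add: xzero_def)

lemma strict_mono_on_phi:
  assumes "0 < a"
  shows "strict_mono_on {0..xzero a} (phi a)"
proof (rule strict_mono_onI)
  fix x y assume xy: "x \<in> {0..xzero a}" "y \<in> {0..xzero a}" "x < y"
  show "phi a x < phi a y"
  proof (rule DERIV_pos_imp_increasing_open [OF \<open>x < y\<close>])
    fix t assume "x < t" "t < y"
    have "(a + 1) * t < (a + 1) * y"
      using \<open>t < y\<close> assms by simp
    moreover have "(a + 1) * y \<le> a"
      using xy assms by (simp add: xzero_def field_simps)
    moreover have "0 < t"
      using \<open>x < t\<close> xy by simp
    ultimately show "\<exists>d. (phi a has_real_derivative d) (at t) \<and> 0 < d"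
      by (intro exI [of _ "t powr (a - 1) * (a - (a + 1) * t)"] conjI phi_has_real_derivative) auto
  next
    show "continuous_on {x..y} (phi a)"
      using xy by (intro continuous_on_subset [OF continuous_on_phi [OF assms]]) auto
  qed
qed

lemma strict_antimono_on_phi:
  assumes "0 < a"
  shows "strict_antimono_on {xzero a..1} (phi a)"
proof (rule monotone_onI)
  fix x y assume xy: "x \<in> {xzero a..1}" "y \<in> {xzero a..1}" "x < y"
  have "0 < xzero a"
    using xzero_bounds [OF assms] by simp
  show "phi a y < phi a x"
  proof (rule DERIV_neg_imp_decreasing_open [OF \<open>x < y\<close>])
    fix t assume "x < t" "t < y"
    have "(a + 1) * x < (a + 1) * t"
      using \<open>x < t\<close> assms by simp
    moreover have "a \<le> (a + 1) * x"
      using xy assms by (simp add: xzero_def field_simps)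
    moreover have "0 < t"
      using \<open>x < t\<close> xy \<open>0 < xzero a\<close> by simp
    ultimately show "\<exists>d. (phi a has_real_derivative d) (at t) \<and> d < 0"
      by (intro exI [of _ "t powr (a - 1) * (a - (a + 1) * t)"] conjI phi_has_real_derivative)
         (auto simp: mult_pos_neg)
  next
    show "continuous_on {x..y} (phi a)"
      using xy \<open>0 < xzero a\<close> by (intro continuous_on_subset [OF continuous_on_phi [OF assms]]) auto
  qed
qed

lemma inj_on_phi_lower: "0 < a \<Longrightarrow> inj_on (phi a) {0..xzero a}"
  by (simp add: strict_mono_on_phi strict_mono_on_imp_inj_on)

lemma inj_on_phi_upper: "0 < a \<Longrightarrow> inj_on (phi a) {xzero a..1}"
  using strict_antimono_on_phi by (simp add: strict_antimono_iff_antimono)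

lemma image_atLeastAtMost_mono:
  fixes g :: "real \<Rightarrow> real"
  assumes "u \<le> v" "continuous_on {u..v} g" "mono_on {u..v} g"
  shows "g ` {u..v} = {g u..g v}"
proof
  show "g ` {u..v} \<subseteq> {g u..g v}"
    using assms(1) by (auto intro!: mono_onD [OF assms(3)])
  show "{g u..g v} \<subseteq> g ` {u..v}"
    using IVT' [of g u _ v] assms(1,2) by (fastforce simp: image_iff)
qed

lemma image_atLeastAtMost_antimono:
  fixes g :: "real \<Rightarrow> real"
  assumes "u \<le> v" "continuous_on {u..v} g" "antimono_on {u..v} g"
  shows "g ` {u..v} = {g v..g u}"
proof
  show "g ` {u..v} \<subseteq> {g v..g u}"
    using assms(1) by (auto intro!: monotone_onD [OF assms(3)])
  show "{g v..g u} \<subseteq> g ` {u..v}"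
    using IVT2' [of g v _ u] assms(1,2) by (fastforce simp: image_iff)
qed

lemma continuous_on_phi_branches:
  assumes "0 < a"
  shows "continuous_on {0..xzero a} (phi a)" "continuous_on {xzero a..1} (phi a)"
  using xzero_bounds [OF assms] by (auto intro: continuous_on_subset [OF continuous_on_phi [OF assms]])

lemma image_phi_branches:
  assumes "0 < a"
  shows "phi a ` {0..xzero a} = {0..phi a (xzero a)}" "phi a ` {xzero a..1} = {0..phi a (xzero a)}"
proof -
  have bounds: "0 < xzero a" "xzero a < 1"
    using xzero_bounds [OF assms] by auto
  have "phi a 0 = 0" "phi a 1 = 0"
    using assms by (simp_all add: phi_def)
  moreover note continuous_on_phi_branches [OF assms]
  ultimately show "phi a ` {0..xzero a} = {0..phi a (xzero a)}" "phi a ` {xzero a..1} = {0..phi a (xzero a)}"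
    using bounds strict_mono_on_phi [OF assms] strict_antimono_on_phi [OF assms]
    by (auto simp: image_atLeastAtMost_mono image_atLeastAtMost_antimono
                   strict_mono_on_imp_mono_on strict_antimono_iff_antimono)
qed

lemma f_eq_the_inv_into_upper:
  "x \<le> xzero a \<Longrightarrow> f a x = the_inv_into {xzero a..1} (phi a) (phi a x)"
  by (simp add: f_def)

lemma f_eq_the_inv_into_lower:
  assumes "0 < a" "xzero a \<le> x"
  shows "f a x = the_inv_into {0..xzero a} (phi a) (phi a x)"
proof (cases "x = xzero a")
  case True
  have "xzero a \<in> {0..xzero a}" "xzero a \<in> {xzero a..1}"
    using xzero_bounds [OF assms(1)] by auto
  with True show ?thesis
    using inj_on_phi_lower [OF assms(1)] inj_on_phi_upper [OF assms(1)]
    by (simp add: f_def the_inv_into_f_f)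
qed (use assms in \<open>simp add: f_def\<close>)

lemma f_swaps_branches:
  assumes "0 < a" "x \<in> {0..xzero a}" "y \<in> {xzero a..1}" "phi a x = phi a y"
  shows "f a x = y" "f a y = x"
proof -
  show "f a x = y"
    using assms by (simp add: f_eq_the_inv_into_upper the_inv_into_f_f [OF inj_on_phi_upper])
  show "f a y = x"
    using assms by (simp add: f_eq_the_inv_into_lower flip: assms(4) add: the_inv_into_f_f [OF inj_on_phi_lower])
qed

lemma continuous_on_the_inv_into_comp:
  fixes g :: "'a::topological_space \<Rightarrow> 'b::t2_space"
  assumes "compact S" "continuous_on S g" "inj_on g S" "continuous_on T g" "g ` T \<subseteq> g ` S"
  shows "continuous_on T (\<lambda>x. the_inv_into S g (g x))"
  by (rule continuous_on_compose2 [OF continuous_on_inv_into]) (use assms in auto)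

lemma continuous_on_f_lower:
  assumes "0 < a"
  shows "continuous_on {0..xzero a} (f a)"
proof -
  have "continuous_on {0..xzero a} (\<lambda>x. the_inv_into {xzero a..1} (phi a) (phi a x))"
    using assms image_phi_branches [OF assms]
    by (intro continuous_on_the_inv_into_comp continuous_on_phi_branches inj_on_phi_upper) auto
  then show ?thesis
    by (rule continuous_on_cong [THEN iffD1, rotated -1]) (auto simp: f_eq_the_inv_into_upper)
qed

lemma continuous_on_f_upper:
  assumes "0 < a"
  shows "continuous_on {xzero a..1} (f a)"
proof -
  have "continuous_on {xzero a..1} (\<lambda>x. the_inv_into {0..xzero a} (phi a) (phi a x))"
    using assms image_phi_branches [OF assms]
    by (intro continuous_on_the_inv_into_comp continuous_on_phi_branches inj_on_phi_lower) auto
  then show ?thesis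
    by (rule continuous_on_cong [THEN iffD1, rotated -1]) (auto simp: f_eq_the_inv_into_lower assms)
qed

lemma powr_add_one: "0 \<le> (w::real) \<Longrightarrow> w powr (a + 1) = w * w powr a"
  by (cases "w = 0") (auto simp: powr_add mult.commute)

lemma mult_powr_less_one: "0 < a \<Longrightarrow> 0 \<le> w \<Longrightarrow> w < 1 \<Longrightarrow> w * w powr a < (1::real)"
  using powr_le1 [of a w] mult_right_le_one_le [of w "w powr a"] by simp

definition powr_diff_quotient :: "real \<Rightarrow> real \<Rightarrow> real" where
  "powr_diff_quotient b w = (if w = 1 then b else (1 - w powr b) / (1 - w))"

lemma isCont_powr_diff_quotient_1:
  assumes "0 < b"
  shows "isCont (powr_diff_quotient b) 1"
proof -
  have "((\<lambda>y. y powr b) has_real_derivative b * 1 powr (b - 1)) (at 1)"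
    by (rule has_real_derivative_powr) simp
  then have "((\<lambda>y. (y powr b - 1) / (y - 1)) \<longlongrightarrow> b) (at 1)"
    by (simp add: has_field_derivative_iff)
  moreover have "\<forall>\<^sub>F y in at 1. (y powr b - 1) / (y - 1) = powr_diff_quotient b y"
    unfolding eventually_at_filter
    by (intro always_eventually allI impI) (auto simp: powr_diff_quotient_def field_simps)
  ultimately have "(powr_diff_quotient b \<longlongrightarrow> b) (at 1)"
    by (simp add: tendsto_cong)
  then show ?thesis
    by (simp add: isCont_def powr_diff_quotient_def)
qed

lemma continuous_on_powr_diff_quotient:
  assumes "0 < b"
  shows "continuous_on {0..} (powr_diff_quotient b)"
proof -
  have "continuous (at x within {0..}) (powr_diff_quotient b)" if "0 \<le> x" for x
  proof (cases "x = 1")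
    case True
    then show ?thesis
      using isCont_powr_diff_quotient_1 [OF assms] by (simp add: continuous_at_imp_continuous_at_within)
  next
    case False
    have "continuous_on ({0..} - {1}) (\<lambda>w. (1 - w powr b) / (1 - w))"
      using assms by (intro continuous_on_divide continuous_on_diff continuous_on_powr'
                            continuous_on_id continuous_on_const) auto
    then have "continuous_on ({0..} - {1}) (powr_diff_quotient b)"
      by (rule continuous_on_cong [THEN iffD1, rotated -1]) (auto simp: powr_diff_quotient_def)
    moreover have "at x within {0..} - {1} = at x within {0..}"
      by (rule at_within_nhd [of _ "- {1}"]) (use False in auto)
    ultimately show ?thesis
      using that False by (metis Diff_iff atLeast_iff continuous_on_eq_continuous_within singletonD)
  qed
  then show ?thesis
    by (simp add: continuous_on_eq_continuous_within)
qed

lemma powr_diff_quotient_pos: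
  assumes "0 < b" "0 \<le> w"
  shows "0 < powr_diff_quotient b w"
proof -
  consider "w < 1" | "w = 1" | "w > 1"
    by linarith
  then show ?thesis
  proof cases
    case 1
    then have "w powr b < 1"
      using assms by (cases "w = 0") (auto simp: powr01_less_one)
    with 1 show ?thesis
      by (simp add: powr_diff_quotient_def)
  next
    case 3
    then have "1 < w powr b"
      using assms by (simp add: powr_less_cancel_iff [of w 0, simplified])
    with 3 show ?thesis
      by (simp add: powr_diff_quotient_def divide_neg_neg)
  qed (use assms in \<open>simp add: powr_diff_quotient_def\<close>)
qed

text \<open>This is the \<open>Y\<close> of the proof idea, with numerator and denominator divided by \<open>1 - w\<close> to
  remove the singularity at \<open>w = 1\<close>.\<close>

definition upper_param :: "real \<Rightarrow> real \<Rightarrow> real" where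
  "upper_param a w = powr_diff_quotient a w / powr_diff_quotient (a + 1) w"

definition lower_param :: "real \<Rightarrow> real \<Rightarrow> real" where
  "lower_param a w = w * upper_param a w"

lemma upper_param_eq:
  assumes "0 \<le> w" "w \<noteq> 1"
  shows "upper_param a w = (1 - w powr a) / (1 - w * w powr a)"
  using assms by (simp add: upper_param_def powr_diff_quotient_def powr_add_one)

lemma upper_param_0 [simp]: "upper_param a 0 = 1"
  by (simp add: upper_param_def powr_diff_quotient_def)

lemma upper_param_1 [simp]: "upper_param a 1 = xzero a"
  by (simp add: upper_param_def powr_diff_quotient_def xzero_def)

lemma upper_param_pos: "0 < a \<Longrightarrow> 0 \<le> w \<Longrightarrow> 0 < upper_param a w"
  by (simp add: upper_param_def powr_diff_quotient_pos)

lemma continuous_on_upper_param: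
  assumes "0 < a"
  shows "continuous_on {0..} (upper_param a)"
proof -
  have "powr_diff_quotient (a + 1) w \<noteq> 0" if "0 \<le> w" for w
    using powr_diff_quotient_pos [of "a + 1" w] that assms by simp
  then show ?thesis
    unfolding upper_param_def [abs_def] using assms
    by (intro continuous_on_divide continuous_on_powr_diff_quotient) auto
qed

lemma upper_param_le_1:
  assumes "0 < a" "0 \<le> w" "w \<le> 1"
  shows "upper_param a w \<le> 1"
proof (cases "w = 1")
  case False
  then have "w powr a < 1"
    using assms by (cases "w = 0") (auto simp: powr01_less_one)
  moreover have "w * w powr a \<le> w powr a"
    using assms by (simp add: mult_left_le_one_le)
  ultimately show ?thesis
    using assms False by (simp add: upper_param_eq)
qed (use assms in \<open>simp add: xzero_def\<close>)

lemma phi_lower_param: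
  assumes "0 < a" "0 \<le> w"
  shows "phi a (lower_param a w) = phi a (upper_param a w)"
proof (cases "w = 1")
  case False
  define y where "y = upper_param a w"
  have "0 < y"
    using assms by (simp add: y_def upper_param_pos)
  have "w powr (a + 1) \<noteq> 1"
    using assms False by (cases "w = 0") auto
  then have "1 - w * w powr a \<noteq> 0"
    using powr_add_one [OF assms(2)] by simp
  then have "w powr a * (1 - w * y) = 1 - y"
    using assms False by (simp add: y_def upper_param_eq field_simps)
  then show ?thesis
    using assms \<open>0 < y\<close>
    by (simp add: lower_param_def phi_eq_powr_mult powr_mult flip: y_def)
qed (simp add: lower_param_def)

lemma params_in_branches:
  assumes "0 < a" "0 \<le> w" "w \<le> 1"
  shows "lower_param a w \<in> {0..xzero a}" "upper_param a w \<in> {xzero a..1}"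
proof -
  define x y where "x = lower_param a w" and "y = upper_param a w"
  have "0 \<le> x" "x \<le> y" "y \<le> 1"
    using assms upper_param_pos [OF assms(1,2)] upper_param_le_1 [OF assms]
    by (simp_all add: x_def y_def lower_param_def mult_left_le_one_le)
  have same_height: "phi a x = phi a y"
    using phi_lower_param [OF assms(1,2)] by (simp add: x_def y_def)
  have "xzero a \<le> y \<and> x \<le> xzero a"
  proof (cases "w = 1")
    case False
    then have "x < y"
      using assms upper_param_pos [OF assms(1,2)] by (simp add: x_def y_def lower_param_def)
    have "\<not> y < xzero a"
      using strict_mono_onD [OF strict_mono_on_phi [OF assms(1)], of x y] \<open>0 \<le> x\<close> \<open>x < y\<close> same_height
      by auto
    moreover have "\<not> xzero a < x"
      using monotone_onD [OF strict_antimono_on_phi [OF assms(1)], of x y] \<open>y \<le> 1\<close> \<open>x < y\<close> same_height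
      by auto
    ultimately show ?thesis
      by simp
  qed (simp add: x_def y_def lower_param_def)
  then show "lower_param a w \<in> {0..xzero a}" "upper_param a w \<in> {xzero a..1}"
    using \<open>0 \<le> x\<close> \<open>y \<le> 1\<close> by (simp_all add: x_def y_def)
qed

lemma f_params:
  assumes "0 < a" "0 \<le> w" "w \<le> 1"
  shows "f a (lower_param a w) = upper_param a w" "f a (upper_param a w) = lower_param a w"
  using f_swaps_branches [OF assms(1) params_in_branches [OF assms] phi_lower_param [OF assms(1,2)]] .

definition upper_param_deriv :: "real \<Rightarrow> real \<Rightarrow> real" where
  "upper_param_deriv a w = w powr a * ((a + 1) * w * upper_param a w - a) / (w * (1 - w * w powr a))"

lemma upper_param_has_real_derivative:
  assumes "0 < a" "0 < w" "w < 1"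
  shows "(upper_param a has_real_derivative upper_param_deriv a w) (at w)"
proof -
  define u where "u = w powr a"
  have "w * u < 1"
    using assms by (simp add: u_def mult_powr_less_one)
  have "((\<lambda>w. (1 - w powr a) / (1 - w * w powr a)) has_real_derivative
          (- (a * u / w) * (1 - w * u) + (1 - u) * (u + w * (a * u / w))) / (1 - w * u)\<^sup>2) (at w)"
    using assms \<open>w * u < 1\<close>
    by (auto intro!: derivative_eq_intros simp: u_def power2_eq_square powr_diff field_simps)
  also have "(- (a * u / w) * (1 - w * u) + (1 - u) * (u + w * (a * u / w))) / (1 - w * u)\<^sup>2
      = upper_param_deriv a w"
    using assms \<open>w * u < 1\<close>
    by (simp add: upper_param_deriv_def upper_param_eq flip: u_def) (simp add: field_simps power2_eq_square)
  finally show ?thesis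
    by (rule has_field_derivative_transform_within_open [of _ _ _ "{0<..<1}"])
       (use assms in \<open>auto simp: upper_param_eq\<close>)
qed

lemma lower_param_has_real_derivative:
  assumes "0 < a" "0 < w" "w < 1"
  shows "(lower_param a has_real_derivative upper_param a w + w * upper_param_deriv a w) (at w)"
  unfolding lower_param_def [abs_def]
  by (auto intro!: derivative_eq_intros upper_param_has_real_derivative [OF assms])

lemma upper_param_sq_primitive:
  assumes "0 < a" "0 < w" "w < 1"
  shows "((\<lambda>w. w * (1 - w powr a) * upper_param a w / (a + 1)) has_real_derivative
           upper_param a w ^ 2 - xzero a * ((1 + w powr a) * upper_param a w)) (at w)"
proof -
  define u y y' where "u = w powr a" and "y = upper_param a w" and "y' = upper_param_deriv a w"
  have "w * u < 1"
    using assms by (simp add: u_def mult_powr_less_one)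
  have y_quot: "(1 - u) / (1 - w * u) = y"
    using assms by (simp add: y_def u_def upper_param_eq)
  then have y_eq: "y * (1 - w * u) = 1 - u"
    using \<open>w * u < 1\<close> by (simp add: field_simps)
  have "w * (1 - u) * y' = u * ((a + 1) * w * y - a) * ((1 - u) / (1 - w * u))"
    using assms \<open>w * u < 1\<close>
    by (simp add: y'_def upper_param_deriv_def field_simps flip: u_def y_def)
  then have y'_eq: "w * (1 - u) * y' = u * y * ((a + 1) * w * y - a)"
    by (simp add: y_quot)
  have "((\<lambda>w. w * (1 - w powr a) * upper_param a w) has_real_derivative
          (1 - u) * y - a * u * y + w * (1 - u) * y') (at w)"
    unfolding u_def y_def y'_def using assms
    by (auto intro!: derivative_eq_intros upper_param_has_real_derivative simp: powr_diff field_simps)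
  also have "(1 - u) * y - a * u * y + w * (1 - u) * y' = (a + 1) * y ^ 2 - a * ((1 + u) * y)"
    using y_eq unfolding y'_eq by algebra
  finally have "((\<lambda>w. w * (1 - w powr a) * upper_param a w / (a + 1)) has_real_derivative
          ((a + 1) * y ^ 2 - a * ((1 + u) * y)) / (a + 1)) (at w)"
    by (rule DERIV_cdivide)
  then show ?thesis
    using assms by (simp add: xzero_def u_def y_def diff_divide_distrib)
qed

lemma powr_ratio_eq_upper_param:
  assumes "0 \<le> w" "w \<noteq> 1"
  shows "(1 - w powr (2 * a)) / (1 - w powr (a + 1)) = (1 + w powr a) * upper_param a w"
proof -
  have "1 - w powr (2 * a) = (1 + w powr a) * (1 - w powr a)"
    using powr_add [of w a a] by (simp add: mult_2 algebra_simps)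
  moreover have "1 - w powr (a + 1) = 1 - w * w powr a"
    using assms by (simp add: powr_add_one)
  moreover have "upper_param a w = (1 - w powr a) / (1 - w * w powr a)"
    using assms by (simp add: upper_param_eq)
  ultimately show ?thesis
    by (simp only: times_divide_eq_right)
qed

lemma continuous_on_lower_param: "0 < a \<Longrightarrow> continuous_on {0..} (lower_param a)"
  unfolding lower_param_def [abs_def] by (intro continuous_intros continuous_on_upper_param)

lemma has_integral_upper_param_sq:
  assumes "0 < a"
  shows "((\<lambda>w. upper_param a w ^ 2) has_integral
           xzero a * ((Digamma ((2 * a + 1) / (a + 1)) - Digamma (1 / (a + 1))) / (a + 1))) {0..1}"
proof -
  define H where "H w = w * (1 - w powr a) * upper_param a w / (a + 1)" for w
  define I where "I = (Digamma ((2 * a + 1) / (a + 1)) - Digamma (1 / (a + 1))) / (a + 1)"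
  have "((\<lambda>w. upper_param a w ^ 2 - xzero a * ((1 + w powr a) * upper_param a w))
          has_integral H 1 - H 0) {0..1}"
  proof (rule fundamental_theorem_of_calculus_interior)
    show "continuous_on {0..1} H"
      unfolding H_def [abs_def] using assms
      by (intro continuous_intros continuous_on_powr' continuous_on_subset [OF continuous_on_upper_param]) auto
    show "(H has_vector_derivative upper_param a w ^ 2 - xzero a * ((1 + w powr a) * upper_param a w)) (at w)"
      if "w \<in> {0<..<1}" for w
      using upper_param_sq_primitive [OF assms, of w] that
      by (simp add: H_def [abs_def] has_real_derivative_iff_has_vector_derivative)
  qed simp
  moreover have "H 1 - H 0 = 0"
    by (simp add: H_def)
  moreover have "((\<lambda>w. (1 + w powr a) * upper_param a w) has_integral I) {0..1}"
  proof -
    have "((\<lambda>w. (1 - w powr (2 * a)) / (1 - w powr (a + 1))) has_integral I) {0<..<1}"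
      using has_integral_powr_ratio [of "a + 1" "2 * a"] assms
      by (simp add: I_def has_integral_Icc_iff_Ioo add.commute)
    then show ?thesis
      unfolding has_integral_Icc_iff_Ioo
      by (rule has_integral_eq [rotated]) (simp add: powr_ratio_eq_upper_param)
  qed
  ultimately have "((\<lambda>w. (upper_param a w ^ 2 - xzero a * ((1 + w powr a) * upper_param a w))
      + xzero a * ((1 + w powr a) * upper_param a w)) has_integral 0 + xzero a * I) {0..1}"
    by (intro has_integral_add has_integral_mult_right) simp_all
  then show ?thesis
    by (simp add: I_def)
qed

lemma has_integral_f_lower_branch:
  assumes "0 < a"
  shows "((\<lambda>w. (upper_param a w + w * upper_param_deriv a w) * upper_param a w)
           has_integral integral {0..xzero a} (f a)) {0..1}"
proof -
  have "((\<lambda>w. (upper_param a w + w * upper_param_deriv a w) *\<^sub>R f a (lower_param a w))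
          has_integral integral {lower_param a 0..lower_param a 1} (f a)) {0..1}"
  proof (rule has_integral_substitution_strong [where s = "{0, 1}" and c = 0 and d = "xzero a"])
    show "lower_param a 0 \<le> lower_param a 1"
      using xzero_bounds [OF assms] by (simp add: lower_param_def)
    show "lower_param a ` {0..1} \<subseteq> {0..xzero a}"
      using params_in_branches [OF assms] by auto
    show "continuous_on {0..xzero a} (f a)"
      by (rule continuous_on_f_lower [OF assms])
    show "continuous_on {0..1} (lower_param a)"
      by (rule continuous_on_subset [OF continuous_on_lower_param [OF assms]]) auto
    show "(lower_param a has_real_derivative upper_param a w + w * upper_param_deriv a w) (at w within {0..1})"
      if "w \<in> {0..1} - {0, 1}" for w
      using that by (intro has_field_derivative_at_within [OF lower_param_has_real_derivative [OF assms]]) auto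
  qed simp_all
  moreover have "lower_param a 0 = 0" "lower_param a 1 = xzero a"
    by (simp_all add: lower_param_def)
  ultimately have "((\<lambda>w. (upper_param a w + w * upper_param_deriv a w) *\<^sub>R f a (lower_param a w))
      has_integral integral {0..xzero a} (f a)) {0..1}"
    by simp
  then show ?thesis
    by (rule has_integral_eq [rotated]) (simp add: f_params(1) [OF assms])
qed

lemma has_integral_f_upper_branch:
  assumes "0 < a"
  shows "((\<lambda>w. upper_param_deriv a w * lower_param a w) has_integral - integral {xzero a..1} (f a)) {0..1}"
proof -
  have "((\<lambda>w. upper_param_deriv a w *\<^sub>R f a (upper_param a w)) has_integral
          integral {upper_param a 0..upper_param a 1} (f a) - integral {upper_param a 1..upper_param a 0} (f a)) {0..1}"
  proof (rule has_integral_substitution_general [where s = "{0, 1}" and c = "xzero a" and d = 1])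
    show "upper_param a ` {0..1} \<subseteq> {xzero a..1}"
      using params_in_branches [OF assms] by auto
    show "continuous_on {xzero a..1} (f a)"
      by (rule continuous_on_f_upper [OF assms])
    show "continuous_on {0..1} (upper_param a)"
      by (rule continuous_on_subset [OF continuous_on_upper_param [OF assms]]) auto
    show "(upper_param a has_real_derivative upper_param_deriv a w) (at w within {0..1})"
      if "w \<in> {0..1} - {0, 1}" for w
      using that by (intro has_field_derivative_at_within [OF upper_param_has_real_derivative [OF assms]]) auto
  qed simp_all
  moreover have "integral {1..xzero a} (f a) = 0"
    using xzero_bounds [OF assms] by simp
  ultimately have "((\<lambda>w. upper_param_deriv a w *\<^sub>R f a (upper_param a w)) has_integral
      - integral {xzero a..1} (f a)) {0..1}"
    by simp
  then show ?thesis
    by (rule has_integral_eq [rotated]) (simp add: f_params(2) [OF assms])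
qed

lemma integral_f_branches_add:
  assumes "0 < a"
  shows "integral {0..xzero a} (f a) + integral {xzero a..1} (f a) =
           xzero a * ((Digamma ((2 * a + 1) / (a + 1)) - Digamma (1 / (a + 1))) / (a + 1))"
proof -
  have "((\<lambda>w. (upper_param a w + w * upper_param_deriv a w) * upper_param a w
                - upper_param_deriv a w * lower_param a w)
          has_integral integral {0..xzero a} (f a) - - integral {xzero a..1} (f a)) {0..1}"
    by (intro has_integral_diff has_integral_f_lower_branch has_integral_f_upper_branch assms)
  then have "((\<lambda>w. upper_param a w ^ 2)
          has_integral integral {0..xzero a} (f a) + integral {xzero a..1} (f a)) {0..1}"
    by (simp add: lower_param_def power2_eq_square algebra_simps)
  then show ?thesis
    using has_integral_upper_param_sq [OF assms] by (rule has_integral_unique)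
qed

lemma integral_f_branches_diff:
  assumes "0 < a"
  shows "integral {0..xzero a} (f a) - integral {xzero a..1} (f a) = xzero a ^ 2"
proof -
  have "((\<lambda>w. (upper_param a w + w * upper_param_deriv a w) * upper_param a w
                + upper_param_deriv a w * lower_param a w)
          has_integral integral {0..xzero a} (f a) + - integral {xzero a..1} (f a)) {0..1}"
    by (intro has_integral_add has_integral_f_lower_branch has_integral_f_upper_branch assms)
  moreover have "((\<lambda>w. (upper_param a w + w * upper_param_deriv a w) * upper_param a w
                + upper_param_deriv a w * lower_param a w)
          has_integral lower_param a 1 * upper_param a 1 - lower_param a 0 * upper_param a 0) {0..1}"
  proof (rule fundamental_theorem_of_calculus_interior)
    show "continuous_on {0..1} (\<lambda>w. lower_param a w * upper_param a w)"
      using assms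
      by (intro continuous_intros continuous_on_subset [OF continuous_on_lower_param]
                continuous_on_subset [OF continuous_on_upper_param]) auto
    show "((\<lambda>w. lower_param a w * upper_param a w) has_vector_derivative
            (upper_param a w + w * upper_param_deriv a w) * upper_param a w
            + upper_param_deriv a w * lower_param a w) (at w)"
      if "w \<in> {0<..<1}" for w
      using that assms
      by (auto intro!: derivative_eq_intros lower_param_has_real_derivative upper_param_has_real_derivative
               simp: has_real_derivative_iff_has_vector_derivative [symmetric] algebra_simps)
  qed simp
  ultimately show ?thesis
    by (auto simp: lower_param_def power2_eq_square dest: has_integral_unique)
qed

lemma integral_f_branches_combine:
  assumes "0 < a"
  shows "integral {0..xzero a} (f a) + integral {xzero a..1} (f a) = integral {0..1} (f a)"
proof (rule Henstock_Kurzweil_Integration.integral_combine)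
  show "0 \<le> xzero a" "xzero a \<le> 1"
    using xzero_bounds [OF assms] by auto
  then show "f a integrable_on {0..1}"
    by (rule Henstock_Kurzweil_Integration.integrable_combine)
       (use continuous_on_f_lower [OF assms] continuous_on_f_upper [OF assms] in
         \<open>auto intro: integrable_continuous_real\<close>)
qed

theorem proposition7:
  fixes a :: real
  assumes "a > 0"
  shows "integral {0..1} (f a) =
           1 / (1 + a) * (1 - a * pi / (a + 1) * cot (a * pi / (a + 1)))
         \<and> integral {0..a / (a + 1)} (f a) =
           1 / (2 * (1 + a)^2) * (1 + a + a^2 - a * pi * cot (a * pi / (a + 1)))"
proof -
  define C S T where "C = cot (a * pi / (a + 1))"
    and "S = integral {0..xzero a} (f a)" and "T = integral {xzero a..1} (f a)"
  have "S + T = xzero a * (1 / a - pi / (a + 1) * C)"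
    using integral_f_branches_add [OF assms] by (simp add: S_def T_def C_def Digamma_diff_eq_cot assms)
  also have "\<dots> = 1 / (1 + a) * (1 - a * pi / (a + 1) * C)"
    using assms by (simp add: xzero_def divide_simps) (simp add: algebra_simps)
  finally have sum: "S + T = 1 / (1 + a) * (1 - a * pi / (a + 1) * C)" .
  have diff: "S - T = (a / (a + 1))\<^sup>2"
    using integral_f_branches_diff [OF assms] by (simp add: S_def T_def xzero_def)
  have "S = ((S + T) + (S - T)) / 2"
    by simp
  also have "\<dots> = 1 / (2 * (1 + a)^2) * (1 + a + a^2 - a * pi * C)"
    unfolding sum diff using assms
    by (simp add: divide_simps) (simp add: algebra_simps power2_eq_square)
  finally show ?thesis
    using sum integral_f_branches_combine [OF assms] by (simp add: C_def S_def T_def xzero_def)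
qed

end
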